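(* Let $n$ entities move in $\mathbb{R}^d$ along piecewise-linear trajectories with vertices at common times $t_0<\dots<t_\tau$, and let $D_\sigma(t)=\max_\psi\|\sigma(t)\psi(t)\|$. The total number of intersections among the functions $D_\sigma$, $\sigma$ ranging over the entities, is $O(\tau n^3)$; here an intersection is a pair $\{\sigma,\psi\}$ together with a time $t$ such that $D_\sigma(t)=D_\psi(t)$ and $t$ is an isolated point of $\{s: D_\sigma(s)=D_\psi(s)\}$.
   Context: $\|pq\|$ denotes Euclidean distance. *)

theory Defs
  imports "HOL-Analysis.Analysis"
begin

(* Points of R^d are represented as functions nat => real; only coordinates i < d matter. *)
definition edist :: "nat \<Rightarrow> (nat \<Rightarrow> real) \<Rightarrow> (nat \<Rightarrow> real) \<Rightarrow> real" where
  "edist d x y = sqrt (\<Sum>i<d. (x i - y i)^2)"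

(* Entities are 0..n-1; P s t is the position of entity s at time t.
   Piecewise linear with vertices at times tm 0 < ... < tm tau. *)
definition piecewise_linear_traj ::
  "nat \<Rightarrow> (nat \<Rightarrow> real) \<Rightarrow> (real \<Rightarrow> nat \<Rightarrow> real) \<Rightarrow> bool" where
  "piecewise_linear_traj tau tm p \<longleftrightarrow>
     (\<forall>k<tau. \<forall>t\<in>{tm k..tm (Suc k)}. \<forall>i.
        p t i = p (tm k) i + (t - tm k) / (tm (Suc k) - tm k) * (p (tm (Suc k)) i - p (tm k) i))"

definition Dfun :: "nat \<Rightarrow> nat \<Rightarrow> (nat \<Rightarrow> real \<Rightarrow> nat \<Rightarrow> real) \<Rightarrow> nat \<Rightarrow> real \<Rightarrow> real" where
  "Dfun d n P s t = Max ((\<lambda>q. edist d (P s t) (P q t)) ` {..<n})"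

definition isolated_pt :: "real \<Rightarrow> real set \<Rightarrow> bool" where
  "isolated_pt t S \<longleftrightarrow> t \<in> S \<and> (\<exists>e>0. \<forall>s\<in>S. s \<noteq> t \<longrightarrow> e \<le> \<bar>s - t\<bar>)"

definition intersections ::
  "nat \<Rightarrow> nat \<Rightarrow> nat \<Rightarrow> (nat \<Rightarrow> real) \<Rightarrow> (nat \<Rightarrow> real \<Rightarrow> nat \<Rightarrow> real) \<Rightarrow> (nat \<times> nat \<times> real) set" where
  "intersections d n tau tm P =
     {(s, q, t). s < q \<and> q < n \<and>
        isolated_pt t {x \<in> {tm 0..tm tau}. Dfun d n P s x = Dfun d n P q x}}"

end

theory Submission
  imports Defs
begin

text \<open>On a segment \<open>[t\<^sub>k, t\<^sub>k\<^sub>+\<^sub>1]\<close> every squared distance \<open>\<parallel>\<sigma>(t)\<psi>(t)\<parallel>\<^sup>2\<close> is a quadratic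
  in \<open>t\<close>, so \<open>D\<^sub>\<sigma>\<^sup>2\<close> is the upper envelope of \<open>n\<close> quadratics. Such an envelope has at most
  \<open>2n\<close> breakpoints: some quadratic is maximal exactly on an interval, contributing two
  breakpoints, and the rest is handled by induction. Between consecutive breakpoints of
  \<open>D\<^sub>\<sigma>\<^sup>2\<close> and \<open>D\<^sub>\<psi>\<^sup>2\<close> their difference is a single quadratic, which either vanishes identically
  (no isolated zeros) or has at most two zeros. So every pair has \<open>O(n)\<close> intersections
  per segment, \<open>O(\<tau> n\<^sup>3)\<close> in total.\<close>

section \<open>Quadratic functions\<close>

definition quadratic_on :: "real set \<Rightarrow> (real \<Rightarrow> real) \<Rightarrow> bool" where
  "quadratic_on S f \<longleftrightarrow> (\<exists>a b c. \<forall>t\<in>S. f t = a * t^2 + b * t + c)"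

lemma quadratic_on_subset: "quadratic_on T f \<Longrightarrow> S \<subseteq> T \<Longrightarrow> quadratic_on S f"
  unfolding quadratic_on_def by (meson subsetD)

lemma quadratic_on_cong: "(\<And>t. t \<in> S \<Longrightarrow> f t = g t) \<Longrightarrow> quadratic_on S f \<Longrightarrow> quadratic_on S g"
  unfolding quadratic_on_def by auto

lemma quadratic_on_add:
  assumes "quadratic_on S f" "quadratic_on S g"
  shows "quadratic_on S (\<lambda>t. f t + g t)"
proof -
  obtain a b c a' b' c' where "\<forall>t\<in>S. f t = a * t^2 + b * t + c" "\<forall>t\<in>S. g t = a' * t^2 + b' * t + c'"
    using assms unfolding quadratic_on_def by blast
  then have "\<forall>t\<in>S. f t + g t = (a + a') * t^2 + (b + b') * t + (c + c')"
    by (simp add: algebra_simps)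
  then show ?thesis unfolding quadratic_on_def by blast
qed

lemma quadratic_on_diff:
  assumes "quadratic_on S f" "quadratic_on S g"
  shows "quadratic_on S (\<lambda>t. f t - g t)"
proof -
  obtain a b c a' b' c' where "\<forall>t\<in>S. f t = a * t^2 + b * t + c" "\<forall>t\<in>S. g t = a' * t^2 + b' * t + c'"
    using assms unfolding quadratic_on_def by blast
  then have "\<forall>t\<in>S. f t - g t = (a - a') * t^2 + (b - b') * t + (c - c')"
    by (simp add: algebra_simps)
  then show ?thesis unfolding quadratic_on_def by blast
qed

lemma quadratic_on_sum:
  assumes "finite I" "\<And>i. i \<in> I \<Longrightarrow> quadratic_on S (f i)"
  shows "quadratic_on S (\<lambda>t. \<Sum>i\<in>I. f i t)"
  using assms
proof (induction I rule: finite_induct)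
  case empty
  show ?case unfolding quadratic_on_def by (intro exI[of _ 0]) simp
next
  case (insert i I)
  then show ?case by (simp add: quadratic_on_add)
qed

lemma quadratic_on_power2_affine:
  assumes "\<And>t. t \<in> S \<Longrightarrow> h t = \<alpha> * t + \<beta>"
  shows "quadratic_on S (\<lambda>t. (h t)^2)"
proof -
  have "\<forall>t\<in>S. (h t)^2 = \<alpha>^2 * t^2 + (2 * \<alpha> * \<beta>) * t + \<beta>^2"
    using assms by (simp add: power2_eq_square algebra_simps)
  then show ?thesis unfolding quadratic_on_def by blast
qed

lemma quadratic_on_continuous_on: "quadratic_on S f \<Longrightarrow> continuous_on S f"
proof -
  assume "quadratic_on S f"
  then obtain a b c where f: "\<forall>t\<in>S. f t = a * t^2 + b * t + c"
    unfolding quadratic_on_def by blast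
  have "continuous_on S (\<lambda>t. a * t^2 + b * t + c)"
    by (intro continuous_intros)
  then show ?thesis
    by (rule continuous_on_eq) (use f in simp)
qed

lemma quadratic_interpolation_identity:
  fixes a b c x1 x2 x3 :: real
  shows "a * ((x1 - x2) * (x2 - x3) * (x3 - x1)) =
    (x3 - x2) * (a * x1^2 + b * x1 + c) - (x3 - x1) * (a * x2^2 + b * x2 + c)
      + (x2 - x1) * (a * x3^2 + b * x3 + c)"
  by (simp add: power2_eq_square algebra_simps)

lemma quadratic_leading_coeff_neg:
  fixes a b c x1 x2 x3 :: real
  assumes "x1 < x2" "x2 < x3"
    and "a * x1^2 + b * x1 + c \<le> 0" "a * x2^2 + b * x2 + c > 0" "a * x3^2 + b * x3 + c \<le> 0"
  shows "a < 0"
proof -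
  have "(x3 - x2) * (a * x1^2 + b * x1 + c) \<le> 0" "(x2 - x1) * (a * x3^2 + b * x3 + c) \<le> 0"
    using assms by (simp_all add: mult_nonneg_nonpos)
  moreover have "(x3 - x1) * (a * x2^2 + b * x2 + c) > 0"
    using assms by simp
  ultimately have "a * ((x1 - x2) * (x2 - x3) * (x3 - x1)) < 0"
    using quadratic_interpolation_identity[of a x1 x2 x3 b c] by linarith
  moreover have "(x1 - x2) * (x2 - x3) * (x3 - x1) > 0"
    using assms by (simp add: mult_neg_neg)
  ultimately show ?thesis
    by (meson mult_nonneg_nonneg not_le order_less_imp_le)
qed

lemma quadratic_leading_coeff_pos:
  fixes a b c x1 x2 x3 :: real
  assumes "x1 < x2" "x2 < x3"
    and "a * x1^2 + b * x1 + c \<ge> 0" "a * x2^2 + b * x2 + c \<le> 0" "a * x3^2 + b * x3 + c > 0"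
  shows "a > 0"
proof -
  have "(x3 - x2) * (a * x1^2 + b * x1 + c) \<ge> 0" "(x3 - x1) * (a * x2^2 + b * x2 + c) \<le> 0"
    using assms by (simp_all add: mult_nonneg_nonpos)
  moreover have "(x2 - x1) * (a * x3^2 + b * x3 + c) > 0"
    using assms by simp
  ultimately have "a * ((x1 - x2) * (x2 - x3) * (x3 - x1)) > 0"
    using quadratic_interpolation_identity[of a x1 x2 x3 b c] by linarith
  moreover have "(x1 - x2) * (x2 - x3) * (x3 - x1) > 0"
    using assms by (simp add: mult_neg_neg)
  ultimately show ?thesis by (simp add: zero_less_mult_iff)
qed

lemma quadratic_three_roots_eq_0:
  fixes a b c x1 x2 x3 :: real
  assumes "x1 < x2" "x2 < x3"
    and "a * x1^2 + b * x1 + c = 0" "a * x2^2 + b * x2 + c = 0" "a * x3^2 + b * x3 + c = 0"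
  shows "a = 0" "b = 0" "c = 0"
proof -
  have "a * ((x1 - x2) * (x2 - x3) * (x3 - x1)) = 0"
    using quadratic_interpolation_identity[of a x1 x2 x3 b c] assms by simp
  with assms show a: "a = 0" by simp
  have "b * x1 + c = 0" "b * x2 + c = 0"
    using assms(3,4) a by simp_all
  then have "b * x1 = b * x2"
    by linarith
  then show b: "b = 0"
    using assms(1) by simp
  show "c = 0" using assms a b by simp
qed

text \<open>A positive value at \<open>t2\<close> would make the quadratic concave (points \<open>t1, t2, t3\<close>)
  and, unless \<open>u = t1\<close>, convex (points \<open>u, t1, t2\<close>).\<close>
lemma quadratic_nonpos_between:
  fixes a b c u t1 t2 t3 :: real
  assumes "u \<le> t1" "t1 < t2" "t2 < t3"
    and "a * u^2 + b * u + c \<ge> 0" "a * t1^2 + b * t1 + c \<le> 0" "a * t3^2 + b * t3 + c \<le> 0"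
    and "u = t1 \<Longrightarrow> 2 * a * t1 + b \<le> 0"
  shows "a * t2^2 + b * t2 + c \<le> 0"
proof (rule ccontr)
  assume pos: "\<not> ?thesis"
  then have concave: "a < 0"
    using quadratic_leading_coeff_neg[of t1 t2 t3 a b c] assms by linarith
  show False
  proof (cases "u = t1")
    case True
    have "a * t2^2 + b * t2 + c = (t2 - t1) * ((2 * a * t1 + b) + a * (t2 - t1))"
      using True assms(4,5) by (simp add: power2_eq_square algebra_simps)
    moreover have "a * (t2 - t1) < 0"
      using assms(2) concave by (simp add: mult_neg_pos)
    then have "(2 * a * t1 + b) + a * (t2 - t1) < 0"
      using True assms(7) by linarith
    moreover have "t2 - t1 > 0"
      using assms(2) by simp
    ultimately have "a * t2^2 + b * t2 + c < 0"
      by (simp add: mult_pos_neg)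
    with pos show False by simp
  next
    case False
    then have "a > 0"
      using quadratic_leading_coeff_pos[of u t1 t2 a b c] assms pos by linarith
    with concave show False by simp
  qed
qed

lemma quadratic_le_between:
  fixes f g :: "real \<Rightarrow> real"
  assumes f: "\<forall>t\<in>S. f t = a * t^2 + b * t + c" and g: "\<forall>t\<in>S. g t = a' * t^2 + b' * t + c'"
    and "u \<in> S" "t1 \<in> S" "t2 \<in> S" "t3 \<in> S" "u \<le> t1" "t1 < t2" "t2 < t3"
    and "g u \<le> f u" "f t1 \<le> g t1" "f t3 \<le> g t3"
    and slope: "u = t1 \<Longrightarrow> 2 * a * t1 + b \<le> 2 * a' * t1 + b'"
  shows "f t2 \<le> g t2"
proof -
  have diff: "f t - g t = (a - a') * t^2 + (b - b') * t + (c - c')" if "t \<in> S" for t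
    using f g that by (simp add: algebra_simps)
  have "(a - a') * t2^2 + (b - b') * t2 + (c - c') \<le> 0"
  proof (rule quadratic_nonpos_between[OF \<open>u \<le> t1\<close> \<open>t1 < t2\<close> \<open>t2 < t3\<close>])
    show "(a - a') * u^2 + (b - b') * u + (c - c') \<ge> 0"
      using diff[OF \<open>u \<in> S\<close>] \<open>g u \<le> f u\<close> by simp
    show "(a - a') * t1^2 + (b - b') * t1 + (c - c') \<le> 0"
      using diff[OF \<open>t1 \<in> S\<close>] \<open>f t1 \<le> g t1\<close> by simp
    show "(a - a') * t3^2 + (b - b') * t3 + (c - c') \<le> 0"
      using diff[OF \<open>t3 \<in> S\<close>] \<open>f t3 \<le> g t3\<close> by simp
    show "2 * (a - a') * t1 + (b - b') \<le> 0" if "u = t1"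
      using slope[OF that] by (simp add: algebra_simps)
  qed
  then show ?thesis
    using diff[OF \<open>t2 \<in> S\<close>] by simp
qed

section \<open>Upper envelopes of quadratics\<close>

lemma obtain_max_on_finite:
  fixes g :: "'a \<Rightarrow> 'b::linorder"
  assumes "finite A" "A \<noteq> {}"
  obtains i where "i \<in> A" "\<And>c. c \<in> A \<Longrightarrow> g c \<le> g i"
proof -
  have "Max (g ` A) \<in> g ` A"
    using assms by simp
  then obtain i where i: "i \<in> A" "g i = Max (g ` A)"
    by auto
  show ?thesis
  proof (rule that[OF i(1)])
    show "g c \<le> g i" if "c \<in> A" for c
      using i(2) assms(1) that by simp
  qed
qed

lemma obtain_lex_max_on_finite:
  fixes g h :: "'a \<Rightarrow> 'b::linorder"
  assumes "finite A" "A \<noteq> {}"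
  obtains b where "b \<in> A" "\<And>c. c \<in> A \<Longrightarrow> g c < g b \<or> g c = g b \<and> h c \<le> h b"
proof -
  obtain b0 where b0: "b0 \<in> A" "\<And>c. c \<in> A \<Longrightarrow> g c \<le> g b0"
    using obtain_max_on_finite[OF assms, where g = g] by blast
  let ?B = "{c \<in> A. g c = g b0}"
  obtain b where b: "b \<in> ?B" "\<And>c. c \<in> ?B \<Longrightarrow> h c \<le> h b"
    using obtain_max_on_finite[of ?B h] assms b0(1) by auto
  show ?thesis
  proof (rule that)
    show "b \<in> A"
      using b(1) by simp
    show "g c < g b \<or> g c = g b \<and> h c \<le> h b" if "c \<in> A" for c
      using b b0(2)[OF that] that by (cases "g c = g b0") auto
  qed
qed

lemma obtain_quadratic_coeffs:
  assumes "\<forall>i\<in>A. quadratic_on S (f i)"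
  obtains ca cb cc where "\<forall>i\<in>A. \<forall>t\<in>S. f i t = ca i * t^2 + cb i * t + cc i"
proof -
  have "\<forall>i\<in>A. \<exists>a. \<exists>b c. \<forall>t\<in>S. f i t = a * t^2 + b * t + c"
    using assms unfolding quadratic_on_def .
  from bchoice[OF this] obtain ca where "\<forall>i\<in>A. \<exists>b c. \<forall>t\<in>S. f i t = ca i * t^2 + b * t + c"
    by blast
  from bchoice[OF this] obtain cb where "\<forall>i\<in>A. \<exists>c. \<forall>t\<in>S. f i t = ca i * t^2 + cb i * t + c"
    by blast
  from bchoice[OF this] obtain cc where "\<forall>i\<in>A. \<forall>t\<in>S. f i t = ca i * t^2 + cb i * t + cc i"
    by blast
  then show ?thesis
    by (rule that)
qed

definition dominance_set :: "('i \<Rightarrow> real \<Rightarrow> real) \<Rightarrow> 'i set \<Rightarrow> real set \<Rightarrow> 'i \<Rightarrow> real set" where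
  "dominance_set f A S i = {t \<in> S. \<forall>c\<in>A. f c t \<le> f i t}"

lemma dominance_set_subset: "dominance_set f A S i \<subseteq> S"
  unfolding dominance_set_def by blast

lemma closed_dominance_set:
  assumes "closed S" "\<And>c. c \<in> insert i A \<Longrightarrow> continuous_on S (f c)"
  shows "closed (dominance_set f A S i)"
proof -
  have "dominance_set f A S i = S \<inter> (\<Inter>c\<in>A. {t \<in> S. f c t \<le> f i t})"
    unfolding dominance_set_def by blast
  also have "closed \<dots>"
    using assms by (intro closed_Int closed_INT ballI continuous_on_closed_Collect_le) auto
  finally show ?thesis .
qed

lemma bdd_below_dominance_set: "bdd_below (dominance_set f A {al..be} i)"
  by (rule bdd_below_mono[OF bdd_below_Icc dominance_set_subset])

lemma bdd_above_dominance_set: "bdd_above (dominance_set f A {al..be} i)"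
  by (rule bdd_above_mono[OF bdd_above_Icc dominance_set_subset])

lemma closed_dominance_set_quadratic:
  assumes "\<forall>c\<in>A. quadratic_on {al..be} (f c)" "i \<in> A"
  shows "closed (dominance_set f A {al..be} i)"
  using assms by (intro closed_dominance_set) (auto intro: quadratic_on_continuous_on)

lemma Inf_dominance_set_mem:
  assumes "\<forall>c\<in>A. quadratic_on {al..be} (f c)" "i \<in> A" "dominance_set f A {al..be} i \<noteq> {}"
  shows "Inf (dominance_set f A {al..be} i) \<in> dominance_set f A {al..be} i"
  using assms
  by (intro closed_contains_Inf bdd_below_dominance_set closed_dominance_set_quadratic)

text \<open>\<open>2 * ca c * t + cb c\<close> is the slope of \<open>f c\<close> at \<open>t\<close>: the dominance set of \<open>c\<close>
  starts before that of \<open>b\<close>, or at the same point with a smaller slope there.\<close>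
lemma le_between_if_dominance_starts_earlier:
  fixes f :: "'i \<Rightarrow> real \<Rightarrow> real" and A :: "'i set" and al be :: real
  defines "S \<equiv> dominance_set f A {al..be}"
  assumes coeff: "\<forall>i\<in>A. \<forall>t\<in>{al..be}. f i t = ca i * t^2 + cb i * t + cc i"
    and "b \<in> A" "c \<in> A" and t1: "t1 \<in> S b" and t3: "t3 \<in> S b" and "t1 < t2" "t2 < t3"
    and "t2 \<in> S c"
    and earlier: "Inf (S c) < Inf (S b) \<or>
      Inf (S c) = Inf (S b) \<and> 2 * ca c * Inf (S c) + cb c \<le> 2 * ca b * Inf (S b) + cb b"
  shows "f c t2 \<le> f b t2"
proof -
  have S_iff: "t \<in> S i \<longleftrightarrow> t \<in> {al..be} \<and> (\<forall>c\<in>A. f c t \<le> f i t)" for i t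
    unfolding S_def dominance_set_def by blast
  have "\<forall>i\<in>A. quadratic_on {al..be} (f i)"
    using coeff unfolding quadratic_on_def by blast
  define u where "u = Inf (S c)"
  have "u \<in> S c"
    using Inf_dominance_set_mem[OF \<open>\<forall>i\<in>A. quadratic_on {al..be} (f i)\<close> \<open>c \<in> A\<close>] \<open>t2 \<in> S c\<close>
    unfolding u_def S_def by blast
  have "Inf (S b) \<le> t1"
    using t1 unfolding S_def by (intro cInf_lower bdd_below_dominance_set)
  then have "u \<le> t1" and slope: "u = t1 \<Longrightarrow> 2 * ca c * t1 + cb c \<le> 2 * ca b * t1 + cb b"
    using earlier unfolding u_def by auto
  have "t1 \<in> {al..be}" "t3 \<in> {al..be}" "u \<in> {al..be}"
    using t1 t3 \<open>u \<in> S c\<close> S_iff by simp_all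
  moreover have "f b u \<le> f c u" "f c t1 \<le> f b t1" "f c t3 \<le> f b t3"
    using \<open>u \<in> S c\<close> t1 t3 \<open>b \<in> A\<close> \<open>c \<in> A\<close> S_iff by simp_all
  moreover have "\<forall>t\<in>{al..be}. f c t = ca c * t^2 + cb c * t + cc c"
    "\<forall>t\<in>{al..be}. f b t = ca b * t^2 + cb b * t + cc b"
    using coeff \<open>b \<in> A\<close> \<open>c \<in> A\<close> by simp_all
  moreover have "t2 \<in> {al..be}"
    using \<open>t2 \<in> S c\<close> S_iff by simp
  ultimately show ?thesis
    using quadratic_le_between \<open>u \<le> t1\<close> \<open>t1 < t2\<close> \<open>t2 < t3\<close> slope by blast
qed

lemma is_interval_dominance_set_if_last:
  fixes f :: "'i \<Rightarrow> real \<Rightarrow> real" and A :: "'i set" and al be :: real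
  defines "S \<equiv> dominance_set f A {al..be}"
  assumes fin: "finite A" and ne: "A \<noteq> {}" and "b \<in> A"
    and coeff: "\<forall>i\<in>A. \<forall>t\<in>{al..be}. f i t = ca i * t^2 + cb i * t + cc i"
    and last: "\<And>c. c \<in> A \<Longrightarrow> S c \<noteq> {} \<Longrightarrow> Inf (S c) < Inf (S b) \<or>
      Inf (S c) = Inf (S b) \<and> 2 * ca c * Inf (S c) + cb c \<le> 2 * ca b * Inf (S b) + cb b"
  shows "is_interval (S b)"
proof -
  have S_iff: "t \<in> S i \<longleftrightarrow> t \<in> {al..be} \<and> (\<forall>c\<in>A. f c t \<le> f i t)" for i t
    unfolding S_def dominance_set_def by blast
  have "t2 \<in> S b" if t1: "t1 \<in> S b" and t3: "t3 \<in> S b" and "t1 < t2" "t2 < t3" for t1 t2 t3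
  proof -
    have t2: "t2 \<in> {al..be}"
      using t1 t3 \<open>t1 < t2\<close> \<open>t2 < t3\<close> S_iff by simp
    obtain c where "c \<in> A" and c_max: "\<And>c'. c' \<in> A \<Longrightarrow> f c' t2 \<le> f c t2"
      using obtain_max_on_finite[OF fin ne, where g = "\<lambda>c. f c t2"] by blast
    then have "t2 \<in> S c"
      using t2 S_iff by simp
    then have "f c t2 \<le> f b t2"
      using le_between_if_dominance_starts_earlier[OF coeff \<open>b \<in> A\<close> \<open>c \<in> A\<close>] t1 t3
        \<open>t1 < t2\<close> \<open>t2 < t3\<close> last[OF \<open>c \<in> A\<close>] unfolding S_def by blast
    then show "t2 \<in> S b"
      using c_max t2 S_iff by fastforce
  qed
  then show ?thesis
    unfolding is_interval_1 by (metis order_le_less)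
qed

lemma obtain_interval_dominance_set:
  fixes f :: "'i \<Rightarrow> real \<Rightarrow> real"
  assumes fin: "finite A" and ne: "A \<noteq> {}" and "al \<le> be"
    and quad: "\<forall>i\<in>A. quadratic_on {al..be} (f i)"
  obtains b where "b \<in> A" "is_interval (dominance_set f A {al..be} b)"
proof -
  obtain ca cb cc where coeff: "\<forall>i\<in>A. \<forall>t\<in>{al..be}. f i t = ca i * t^2 + cb i * t + cc i"
    using obtain_quadratic_coeffs[OF quad] by blast
  define S where "S = dominance_set f A {al..be}"
  define T where "T = {i \<in> A. S i \<noteq> {}}"
  obtain i0 where "i0 \<in> A" "\<And>c. c \<in> A \<Longrightarrow> f c al \<le> f i0 al"
    using obtain_max_on_finite[OF fin ne, where g = "\<lambda>c. f c al"] by blast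
  then have "al \<in> S i0"
    using \<open>al \<le> be\<close> unfolding S_def dominance_set_def by simp
  then have "T \<noteq> {}"
    using \<open>i0 \<in> A\<close> unfolding T_def by blast
  moreover have "finite T"
    using fin unfolding T_def by simp
  ultimately obtain b where "b \<in> T"
    "\<And>c. c \<in> T \<Longrightarrow> Inf (S c) < Inf (S b) \<or>
       Inf (S c) = Inf (S b) \<and> 2 * ca c * Inf (S c) + cb c \<le> 2 * ca b * Inf (S b) + cb b"
    using obtain_lex_max_on_finite[of T "\<lambda>i. Inf (S i)" "\<lambda>i. 2 * ca i * Inf (S i) + cb i"]
    by blast
  then have "b \<in> A" "is_interval (S b)"
    using is_interval_dominance_set_if_last[OF fin ne _ coeff] unfolding T_def S_def by auto
  then show ?thesis
    using that unfolding S_def by blast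
qed

definition upper_envelope_breaks ::
  "('i \<Rightarrow> real \<Rightarrow> real) \<Rightarrow> 'i set \<Rightarrow> real \<Rightarrow> real \<Rightarrow> real set \<Rightarrow> bool" where
  "upper_envelope_breaks f A al be K \<longleftrightarrow>
     (\<forall>x y. al \<le> x \<longrightarrow> y \<le> be \<longrightarrow> {x..y} \<inter> K = {} \<longrightarrow>
        (\<exists>i\<in>A. \<forall>t\<in>{x..y}. Max ((\<lambda>j. f j t) ` A) = f i t))"

lemma Max_dominance_set:
  assumes "finite A" "b \<in> A" "t \<in> dominance_set f A S b"
  shows "Max ((\<lambda>j. f j t) ` A) = f b t"
  using assms unfolding dominance_set_def by (intro Max_eqI) auto

lemma Max_insert_notin_dominance_set:
  assumes "finite A" "A \<noteq> {}" "t \<in> S" "t \<notin> dominance_set f (insert b A) S b"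
  shows "Max ((\<lambda>j. f j t) ` insert b A) = Max ((\<lambda>j. f j t) ` A)"
proof -
  obtain c where "c \<in> A" "f b t < f c t"
    using assms(3,4) unfolding dominance_set_def by (auto simp: not_le)
  moreover have "f c t \<le> Max ((\<lambda>j. f j t) ` A)"
    using assms(1) \<open>c \<in> A\<close> by simp
  ultimately have "f b t \<le> Max ((\<lambda>j. f j t) ` A)"
    by linarith
  then show ?thesis
    using assms(1,2) by simp
qed

text \<open>An interval avoiding \<open>Inf S\<close> and \<open>Sup S\<close> either misses \<open>S\<close> or, \<open>S\<close> being an
  interval, lies inside it.\<close>
lemma upper_envelope_breaks_insert:
  fixes f :: "'i \<Rightarrow> real \<Rightarrow> real" and b :: 'i and A :: "'i set" and al be :: real
  defines "S \<equiv> dominance_set f (insert b A) {al..be} b"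
  assumes fin: "finite A" and ne: "A \<noteq> {}"
    and "closed S" "is_interval S"
    and breaks: "upper_envelope_breaks f A al be K"
  shows "upper_envelope_breaks f (insert b A) al be (insert (Inf S) (insert (Sup S) K))"
  unfolding upper_envelope_breaks_def
proof (intro allI impI)
  fix x y assume "al \<le> x" "y \<le> be" and avoid: "{x..y} \<inter> insert (Inf S) (insert (Sup S) K) = {}"
  show "\<exists>i\<in>insert b A. \<forall>t\<in>{x..y}. Max ((\<lambda>j. f j t) ` insert b A) = f i t"
  proof (cases "{x..y} \<inter> S = {}")
    case True
    obtain i where "i \<in> A" and i: "\<forall>t\<in>{x..y}. Max ((\<lambda>j. f j t) ` A) = f i t"
      using breaks avoid \<open>al \<le> x\<close> \<open>y \<le> be\<close> unfolding upper_envelope_breaks_def by blast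
    have "Max ((\<lambda>j. f j t) ` insert b A) = f i t" if "t \<in> {x..y}" for t
    proof -
      have "t \<in> {al..be}" "t \<notin> S"
        using True that \<open>al \<le> x\<close> \<open>y \<le> be\<close> by auto
      then have "Max ((\<lambda>j. f j t) ` insert b A) = Max ((\<lambda>j. f j t) ` A)"
        unfolding S_def by (rule Max_insert_notin_dominance_set[OF fin ne])
      then show ?thesis
        using i that by simp
    qed
    then show ?thesis
      using \<open>i \<in> A\<close> by blast
  next
    case False
    then obtain t0 where t0: "t0 \<in> {x..y}" "t0 \<in> S"
      by blast
    have bdd: "bdd_below S" "bdd_above S"
      unfolding S_def by (rule bdd_below_dominance_set bdd_above_dominance_set)+
    have "Inf S \<in> S" "Sup S \<in> S"
      using t0(2) bdd \<open>closed S\<close> by (auto intro: closed_contains_Inf closed_contains_Sup)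
    moreover have "Inf S \<notin> {x..y}" "Sup S \<notin> {x..y}"
      using avoid by blast+
    then have "Inf S < x" "y < Sup S"
      using t0(1) cInf_lower[OF t0(2) bdd(1)] cSup_upper[OF t0(2) bdd(2)] by auto
    ultimately have "{x..y} \<subseteq> S"
      using \<open>is_interval S\<close> unfolding is_interval_1
      by (meson atLeastAtMost_iff less_imp_le order_trans subsetI)
    then have "Max ((\<lambda>j. f j t) ` insert b A) = f b t" if "t \<in> {x..y}" for t
      using Max_dominance_set[of "insert b A" b t f "{al..be}"] fin that unfolding S_def by blast
    then show ?thesis
      by blast
  qed
qed

lemma ex_upper_envelope_breaks:
  fixes f :: "'i \<Rightarrow> real \<Rightarrow> real"
  assumes "finite A" "A \<noteq> {}" "al \<le> be" "\<forall>i\<in>A. quadratic_on {al..be} (f i)"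
  shows "\<exists>K. finite K \<and> card K \<le> 2 * card A \<and> upper_envelope_breaks f A al be K"
  using assms
proof (induction "card A" arbitrary: A rule: less_induct)
  case less
  note fin = less.prems(1) and ne = less.prems(2) and quad = less.prems(4)
  obtain b where "b \<in> A" and interval: "is_interval (dominance_set f A {al..be} b)"
    using obtain_interval_dominance_set[OF fin ne \<open>al \<le> be\<close> quad] by blast
  define A' where "A' = A - {b}"
  have A: "A = insert b A'"
    using \<open>b \<in> A\<close> unfolding A'_def by blast
  show ?case
  proof (cases "A' = {}")
    case True
    then show ?thesis
      unfolding A upper_envelope_breaks_def by (intro exI[of _ "{}"]) auto
  next
    case False
    have "card A' < card A" "finite A'"
      using card_Diff1_less[OF fin \<open>b \<in> A\<close>] fin unfolding A'_def by auto
    moreover have "\<forall>i\<in>A'. quadratic_on {al..be} (f i)"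
      using quad unfolding A'_def by blast
    ultimately obtain K where K: "finite K" "card K \<le> 2 * card A'" "upper_envelope_breaks f A' al be K"
      using less.hyps False \<open>al \<le> be\<close> by blast
    define S where "S = dominance_set f A {al..be} b"
    have "closed S"
      unfolding S_def using closed_dominance_set_quadratic[OF quad \<open>b \<in> A\<close>] .
    have "card A = Suc (card A')"
      using card_Suc_Diff1[OF fin \<open>b \<in> A\<close>] unfolding A'_def by simp
    moreover have "card (insert (Inf S) (insert (Sup S) K)) \<le> card K + 2"
      using K(1) by (simp add: card_insert_if)
    moreover have "upper_envelope_breaks f A al be (insert (Inf S) (insert (Sup S) K))"
      using upper_envelope_breaks_insert[OF \<open>finite A'\<close> False _ _ K(3)] \<open>closed S\<close> interval
      unfolding S_def A by blast
    ultimately show ?thesis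
      using K by (intro exI[of _ "insert (Inf S) (insert (Sup S) K)"]) auto
  qed
qed

lemma quadratic_on_diff_upper_envelopes:
  assumes "\<forall>j\<in>A. quadratic_on {al..be} (f j)" "\<forall>j\<in>A. quadratic_on {al..be} (g j)"
    and "upper_envelope_breaks f A al be Kf" "upper_envelope_breaks g A al be Kg"
    and "al \<le> x" "y \<le> be" "{x..y} \<inter> (Kf \<union> Kg) = {}"
  shows "quadratic_on {x..y} (\<lambda>t. Max ((\<lambda>j. f j t) ` A) - Max ((\<lambda>j. g j t) ` A))"
proof -
  have "{x..y} \<inter> Kf = {}" "{x..y} \<inter> Kg = {}"
    using assms(7) by blast+
  then obtain i j where "i \<in> A" and fi: "\<forall>t\<in>{x..y}. Max ((\<lambda>j. f j t) ` A) = f i t"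
    and "j \<in> A" and gj: "\<forall>t\<in>{x..y}. Max ((\<lambda>j. g j t) ` A) = g j t"
    using assms(3-6) unfolding upper_envelope_breaks_def by blast
  moreover have "{x..y} \<subseteq> {al..be}"
    using assms(5,6) by auto
  ultimately have "quadratic_on {x..y} (\<lambda>t. f i t - g j t)"
    using assms(1,2) by (blast intro: quadratic_on_diff quadratic_on_subset)
  then show ?thesis
    by (rule quadratic_on_cong[rotated]) (simp add: fi gj)
qed

section \<open>Counting isolated zeros\<close>

lemma card_le_2_if_no_increasing_triple:
  fixes S :: "real set"
  assumes "\<And>x y z. x \<in> S \<Longrightarrow> y \<in> S \<Longrightarrow> z \<in> S \<Longrightarrow> x < y \<Longrightarrow> y < z \<Longrightarrow> False"
  shows "finite S \<and> card S \<le> 2"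
proof (rule ccontr)
  assume "\<not> (finite S \<and> card S \<le> 2)"
  then obtain B where "B \<subseteq> S" "card B = 3"
    by (metis infinite_arbitrarily_large not_less_eq_eq numeral_2_eq_2 numeral_3_eq_3
        obtain_subset_with_card_n)
  then obtain x y z where "x \<in> S" "y \<in> S" "z \<in> S" "x \<noteq> y" "y \<noteq> z" "x \<noteq> z"
    by (auto simp: card_3_iff)
  then show False
    using assms[of x y z] assms[of x z y] assms[of y x z] assms[of y z x] assms[of z x y]
      assms[of z y x]
    by linarith
qed

lemma card_le_mult_card_if_fibres_le:
  assumes "finite K" "\<forall>z\<in>Z. g z \<in> K" "\<And>k. finite {z \<in> Z. g z = k} \<and> card {z \<in> Z. g z = k} \<le> m"
  shows "finite Z \<and> card Z \<le> m * card K"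
proof -
  have Z: "Z = (\<Union>k\<in>K. {z \<in> Z. g z = k})"
    using assms(2) by blast
  have "finite Z"
    using assms(1,3) by (subst Z) blast
  have "card Z \<le> (\<Sum>k\<in>K. card {z \<in> Z. g z = k})"
    by (subst Z) (rule card_UN_le[OF assms(1)])
  also have "\<dots> \<le> (\<Sum>k\<in>K. m)"
    using assms(3) by (intro sum_mono) blast
  finally show ?thesis
    using \<open>finite Z\<close> by (simp add: mult.commute)
qed

lemma no_breakpoint_between_if_same_next:
  fixes K :: "real set"
  assumes "finite K" "z1 \<notin> K" "k3 \<in> K" "z3 < k3"
    and same_next: "Min {k \<in> K. z1 < k} = Min {k \<in> K. z3 < k}"
  shows "{z1..z3} \<inter> K = {}"
proof (rule ccontr)
  assume "{z1..z3} \<inter> K \<noteq> {}"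
  then obtain k where "k \<in> K" "z1 \<le> k" "k \<le> z3"
    by auto
  moreover have "z1 \<noteq> k"
    using \<open>z1 \<notin> K\<close> \<open>k \<in> K\<close> by blast
  ultimately have "Min {k \<in> K. z1 < k} \<le> k"
    using \<open>finite K\<close> by (intro Min_le) auto
  then have "Min {k \<in> K. z3 < k} \<le> z3"
    using same_next \<open>k \<le> z3\<close> by linarith
  moreover have "Min {k \<in> K. z3 < k} \<in> {k \<in> K. z3 < k}"
    using assms(1,3,4) by (intro Min_in) auto
  ultimately show False
    by simp
qed

text \<open>Charging each point of \<open>Z - K\<close> to the next point of \<open>K\<close> charges at most two points
  to every breakpoint.\<close>
lemma card_le_3_card_breakpoints:
  fixes Z K :: "real set"
  assumes "finite K" and bounded: "\<forall>z\<in>Z. \<exists>k\<in>K. z \<le> k"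
    and no_triple: "\<And>z1 z2 z3. z1 \<in> Z \<Longrightarrow> z2 \<in> Z \<Longrightarrow> z3 \<in> Z \<Longrightarrow> z1 < z2 \<Longrightarrow> z2 < z3 \<Longrightarrow>
      {z1..z3} \<inter> K = {} \<Longrightarrow> False"
  shows "finite Z \<and> card Z \<le> 3 * card K"
proof -
  define next_break where "next_break z = Min {k \<in> K. z < k}" for z
  have later: "\<exists>k\<in>K. z < k" if "z \<in> Z - K" for z
    using bounded that by (force simp: order_le_less)
  have "finite (Z - K) \<and> card (Z - K) \<le> 2 * card K"
  proof (rule card_le_mult_card_if_fibres_le[OF \<open>finite K\<close>])
    show "\<forall>z\<in>Z - K. next_break z \<in> K"
    proof
      fix z assume "z \<in> Z - K"
      then have "next_break z \<in> {k \<in> K. z < k}"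
        using later \<open>finite K\<close> unfolding next_break_def by (intro Min_in) auto
      then show "next_break z \<in> K"
        by simp
    qed
    fix k
    show "finite {z \<in> Z - K. next_break z = k} \<and> card {z \<in> Z - K. next_break z = k} \<le> 2"
    proof (rule card_le_2_if_no_increasing_triple)
      fix z1 z2 z3 assume z: "z1 \<in> {z \<in> Z - K. next_break z = k}" "z2 \<in> {z \<in> Z - K. next_break z = k}"
        "z3 \<in> {z \<in> Z - K. next_break z = k}" "z1 < z2" "z2 < z3"
      obtain k3 where "k3 \<in> K" "z3 < k3"
        using later z(3) by blast
      then have "{z1..z3} \<inter> K = {}"
        using z(1,3) \<open>finite K\<close> unfolding next_break_def
        by (intro no_breakpoint_between_if_same_next) auto
      then show False
        using no_triple[of z1 z2 z3] z by blast
    qed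
  qed
  moreover have "Z \<subseteq> (Z - K) \<union> K"
    by blast
  ultimately have "finite Z" "card Z \<le> card (Z - K) + card K"
    using card_mono[of "(Z - K) \<union> K" Z] card_Un_le[of "Z - K" K] \<open>finite K\<close>
    by (auto intro: finite_subset)
  then show ?thesis
    using \<open>finite (Z - K) \<and> card (Z - K) \<le> 2 * card K\<close> by linarith
qed

lemma not_isolated_pt_middle_zero:
  assumes "quadratic_on {z1..z3} f" "z1 < z2" "z2 < z3" "f z1 = 0" "f z2 = 0" "f z3 = 0"
    and "{z1..z3} \<subseteq> S"
  shows "\<not> isolated_pt z2 {x \<in> S. f x = 0}"
proof
  assume "isolated_pt z2 {x \<in> S. f x = 0}"
  then obtain e where "e > 0" and e: "\<forall>s\<in>{x \<in> S. f x = 0}. s \<noteq> z2 \<longrightarrow> e \<le> \<bar>s - z2\<bar>"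
    unfolding isolated_pt_def by blast
  obtain a b c where abc: "\<forall>t\<in>{z1..z3}. f t = a * t^2 + b * t + c"
    using assms(1) unfolding quadratic_on_def by blast
  then have "a = 0" "b = 0" "c = 0"
    using quadratic_three_roots_eq_0[of z1 z2 z3 a b c] assms(2-6) by auto
  define d where "d = min e (z3 - z2)"
  have "0 < d" "d \<le> z3 - z2" "d \<le> e"
    using \<open>e > 0\<close> assms(3) unfolding d_def by auto
  define s where "s = z2 + d / 2"
  have "s \<in> {z1..z3}" "s \<noteq> z2" "\<bar>s - z2\<bar> < e"
    using \<open>0 < d\<close> \<open>d \<le> z3 - z2\<close> \<open>d \<le> e\<close> assms(2) unfolding s_def by auto
  moreover have "f s = 0"
    using abc \<open>a = 0\<close> \<open>b = 0\<close> \<open>c = 0\<close> \<open>s \<in> {z1..z3}\<close> by simp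
  ultimately show False
    using e assms(7) by force
qed

lemma card_isolated_zeros_piecewise_quadratic:
  assumes "finite K"
    and pieces: "\<And>x y. al \<le> x \<Longrightarrow> y \<le> be \<Longrightarrow> {x..y} \<inter> K = {} \<Longrightarrow> quadratic_on {x..y} f"
  defines "Z \<equiv> {t. isolated_pt t {x \<in> {al..be}. f x = 0}}"
  shows "finite Z \<and> card Z \<le> 3 * card K + 3"
proof -
  have Z: "z \<in> {al..be}" "f z = 0" if "z \<in> Z" for z
    using that unfolding Z_def isolated_pt_def by auto
  have "finite Z \<and> card Z \<le> 3 * card (insert be K)"
  proof (rule card_le_3_card_breakpoints)
    show "finite (insert be K)"
      using \<open>finite K\<close> by simp
    show "\<forall>z\<in>Z. \<exists>k\<in>insert be K. z \<le> k"
      using Z(1) by auto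
    fix z1 z2 z3 assume z: "z1 \<in> Z" "z2 \<in> Z" "z3 \<in> Z" "z1 < z2" "z2 < z3"
      and avoid: "{z1..z3} \<inter> insert be K = {}"
    have "{z1..z3} \<subseteq> {al..be}"
      using Z(1)[OF z(1)] Z(1)[OF z(3)] by auto
    moreover have "quadratic_on {z1..z3} f"
      using pieces Z(1)[OF z(1)] Z(1)[OF z(3)] avoid by auto
    ultimately have "\<not> isolated_pt z2 {x \<in> {al..be}. f x = 0}"
      using not_isolated_pt_middle_zero z Z(2) by blast
    then show False
      using z(2) unfolding Z_def by blast
  qed
  moreover have "card (insert be K) \<le> card K + 1"
    using \<open>finite K\<close> by (simp add: card_insert_if)
  ultimately show ?thesis
    by linarith
qed

section \<open>Trajectories\<close>

lemma piecewise_linear_traj_affine_on_segment: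
  assumes "piecewise_linear_traj tau tm p" "k < tau"
  shows "\<exists>\<alpha> \<beta>. \<forall>t\<in>{tm k..tm (Suc k)}. p t i = \<alpha> * t + \<beta>"
proof -
  define \<alpha> where "\<alpha> = (p (tm (Suc k)) i - p (tm k) i) / (tm (Suc k) - tm k)"
  have "p t i = \<alpha> * t + (p (tm k) i - \<alpha> * tm k)" if "t \<in> {tm k..tm (Suc k)}" for t
  proof -
    have "p t i = p (tm k) i + (t - tm k) / (tm (Suc k) - tm k) * (p (tm (Suc k)) i - p (tm k) i)"
      using assms that unfolding piecewise_linear_traj_def by blast
    also have "\<dots> = p (tm k) i + (t - tm k) * \<alpha>"
      unfolding \<alpha>_def by simp
    finally show ?thesis
      by (simp add: algebra_simps)
  qed
  then show ?thesis
    by blast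
qed

lemma piecewise_linear_traj_sq_dist_quadratic:
  assumes "piecewise_linear_traj tau tm p" "piecewise_linear_traj tau tm p'" "k < tau"
  shows "quadratic_on {tm k..tm (Suc k)} (\<lambda>t. \<Sum>i<d. (p t i - p' t i)^2)"
proof (rule quadratic_on_sum)
  fix i
  obtain \<alpha> \<beta> \<alpha>' \<beta>' where "\<forall>t\<in>{tm k..tm (Suc k)}. p t i = \<alpha> * t + \<beta>"
    "\<forall>t\<in>{tm k..tm (Suc k)}. p' t i = \<alpha>' * t + \<beta>'"
    using piecewise_linear_traj_affine_on_segment assms by metis
  then have "\<forall>t\<in>{tm k..tm (Suc k)}. p t i - p' t i = (\<alpha> - \<alpha>') * t + (\<beta> - \<beta>')"
    by (simp add: algebra_simps)
  then show "quadratic_on {tm k..tm (Suc k)} (\<lambda>t. (p t i - p' t i)^2)"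
    by (intro quadratic_on_power2_affine) blast
qed simp

lemma Dfun_eq_sqrt_Max:
  assumes "0 < n"
  shows "Dfun d n P s t = sqrt (Max ((\<lambda>q. \<Sum>i<d. (P s t i - P q t i)^2) ` {..<n}))"
proof -
  have "Dfun d n P s t = Max (sqrt ` (\<lambda>q. \<Sum>i<d. (P s t i - P q t i)^2) ` {..<n})"
    unfolding Dfun_def edist_def image_image by simp
  also have "\<dots> = sqrt (Max ((\<lambda>q. \<Sum>i<d. (P s t i - P q t i)^2) ` {..<n}))"
    using assms by (intro mono_Max_commute[symmetric]) (auto intro: monoI)
  finally show ?thesis .
qed

definition segment_intersections ::
  "nat \<Rightarrow> nat \<Rightarrow> (nat \<Rightarrow> real) \<Rightarrow> (nat \<Rightarrow> real \<Rightarrow> nat \<Rightarrow> real) \<Rightarrow> nat \<Rightarrow> nat \<Rightarrow> nat \<Rightarrow> real set" where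
  "segment_intersections d n tm P s q k =
     {t. isolated_pt t {x \<in> {tm k..tm (Suc k)}. Dfun d n P s x = Dfun d n P q x}}"

lemma card_segment_intersections:
  assumes traj: "\<forall>s<n. piecewise_linear_traj tau tm (P s)"
    and "k < tau" "tm k \<le> tm (Suc k)" "s < n" "q < n"
  shows "finite (segment_intersections d n tm P s q k) \<and>
    card (segment_intersections d n tm P s q k) \<le> 12 * n + 3"
proof -
  define g where "g r j t = (\<Sum>i<d. (P r t i - P j t i)^2)" for r j t
  define M where "M r t = Max ((\<lambda>j. g r j t) ` {..<n})" for r t
  have quad: "\<forall>j\<in>{..<n}. quadratic_on {tm k..tm (Suc k)} (g r j)" if "r < n" for r
    using traj that \<open>k < tau\<close> unfolding g_def
    by (auto intro: piecewise_linear_traj_sq_dist_quadratic)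
  have "\<exists>K. finite K \<and> card K \<le> 2 * n \<and> upper_envelope_breaks (g r) {..<n} (tm k) (tm (Suc k)) K"
    if "r < n" for r
    using ex_upper_envelope_breaks[OF _ _ \<open>tm k \<le> tm (Suc k)\<close> quad[OF that]] that by auto
  then obtain Ks Kq where Ks: "finite Ks" "card Ks \<le> 2 * n"
      "upper_envelope_breaks (g s) {..<n} (tm k) (tm (Suc k)) Ks"
    and Kq: "finite Kq" "card Kq \<le> 2 * n"
      "upper_envelope_breaks (g q) {..<n} (tm k) (tm (Suc k)) Kq"
    using \<open>s < n\<close> \<open>q < n\<close> by blast
  define Z where "Z = {t. isolated_pt t {x \<in> {tm k..tm (Suc k)}. M s x - M q x = 0}}"
  have "Dfun d n P s x = Dfun d n P q x \<longleftrightarrow> M s x - M q x = 0" for x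
    using Dfun_eq_sqrt_Max[of n d P] \<open>s < n\<close> unfolding M_def g_def by simp
  then have Z: "segment_intersections d n tm P s q k = Z"
    unfolding segment_intersections_def Z_def by simp
  have "finite (Ks \<union> Kq)" "card (Ks \<union> Kq) \<le> 4 * n"
    using card_Un_le[of Ks Kq] Ks(1,2) Kq(1,2) by auto
  moreover have "finite Z \<and> card Z \<le> 3 * card (Ks \<union> Kq) + 3"
    unfolding Z_def M_def using \<open>finite (Ks \<union> Kq)\<close>
  proof (rule card_isolated_zeros_piecewise_quadratic)
    show "quadratic_on {x..y} (\<lambda>t. Max ((\<lambda>j. g s j t) ` {..<n}) - Max ((\<lambda>j. g q j t) ` {..<n}))"
      if "tm k \<le> x" "y \<le> tm (Suc k)" "{x..y} \<inter> (Ks \<union> Kq) = {}" for x y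
      using quad \<open>s < n\<close> \<open>q < n\<close> Ks(3) Kq(3) that by (intro quadratic_on_diff_upper_envelopes) auto
  qed
  ultimately show ?thesis
    unfolding Z by linarith
qed

lemma obtain_segment:
  fixes tm :: "nat \<Rightarrow> real"
  assumes "0 < tau" "\<forall>k<tau. tm k \<le> tm (Suc k)" "t \<in> {tm 0..tm tau}"
  obtains k where "k < tau" "t \<in> {tm k..tm (Suc k)}"
  using assms
proof (induction tau arbitrary: thesis)
  case 0
  then show ?case by simp
next
  case (Suc m)
  show ?case
  proof (cases "0 < m \<and> t \<le> tm m")
    case True
    have "\<And>k. k < m \<Longrightarrow> t \<in> {tm k..tm (Suc k)} \<Longrightarrow> thesis"
      by (rule Suc.prems(1)) simp_all
    then show ?thesis
      by (rule Suc.IH) (use True Suc.prems(3,4) in auto)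
  next
    case False
    then have "tm m \<le> t"
      using Suc.prems(4) by auto
    then show ?thesis
      using Suc.prems(1)[of m] Suc.prems(4) by simp
  qed
qed

lemma segment_subset_time_span:
  fixes tm :: "nat \<Rightarrow> real"
  assumes "\<forall>k<tau. tm k \<le> tm (Suc k)" "k < tau"
  shows "{tm k..tm (Suc k)} \<subseteq> {tm 0..tm tau}"
proof -
  have "tm i \<le> tm j" if "i \<le> j" "j \<le> tau" for i j
  proof (rule lift_Suc_mono_le_ivl[where N = "{..<tau}"])
    show "tm n \<le> tm (Suc n)" if "n \<in> {..<tau}" for n
      using assms(1) that by simp
    show "{i..<j} \<subseteq> {..<tau}"
      using that by auto
  qed fact
  then have "tm 0 \<le> tm k" "tm (Suc k) \<le> tm tau"
    using assms(2) by simp_all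
  then show ?thesis
    by auto
qed

lemma isolated_pt_subset: "isolated_pt t S \<Longrightarrow> t \<in> T \<Longrightarrow> T \<subseteq> S \<Longrightarrow> isolated_pt t T"
  unfolding isolated_pt_def by blast

lemma intersections_subset_segment_intersections:
  assumes "0 < tau" "\<forall>k<tau. tm k \<le> tm (Suc k)"
  shows "intersections d n tau tm P \<subseteq>
    (\<Union>(k, s, q) \<in> {..<tau} \<times> {..<n} \<times> {..<n}. (\<lambda>t. (s, q, t)) ` segment_intersections d n tm P s q k)"
proof
  fix x assume "x \<in> intersections d n tau tm P"
  then obtain s q t where x: "x = (s, q, t)" "s < n" "q < n"
    and iso: "isolated_pt t {x \<in> {tm 0..tm tau}. Dfun d n P s x = Dfun d n P q x}"
    unfolding intersections_def by auto
  then have "t \<in> {tm 0..tm tau}"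
    unfolding isolated_pt_def by blast
  then obtain k where "k < tau" "t \<in> {tm k..tm (Suc k)}"
    using obtain_segment assms by blast
  moreover have "Dfun d n P s t = Dfun d n P q t"
    using iso unfolding isolated_pt_def by blast
  moreover have "{tm k..tm (Suc k)} \<subseteq> {tm 0..tm tau}"
    using segment_subset_time_span[OF assms(2) \<open>k < tau\<close>] .
  ultimately have "isolated_pt t {x \<in> {tm k..tm (Suc k)}. Dfun d n P s x = Dfun d n P q x}"
    by (intro isolated_pt_subset[OF iso]) auto
  then have "t \<in> segment_intersections d n tm P s q k"
    unfolding segment_intersections_def by simp
  then show "x \<in> (\<Union>(k, s, q) \<in> {..<tau} \<times> {..<n} \<times> {..<n}.
      (\<lambda>t. (s, q, t)) ` segment_intersections d n tm P s q k)"
    using x \<open>k < tau\<close> by blast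
qed

lemma card_intersections_le:
  assumes "0 < tau" "\<forall>k<tau. tm k \<le> tm (Suc k)" "\<forall>s<n. piecewise_linear_traj tau tm (P s)"
  shows "finite (intersections d n tau tm P) \<and>
    card (intersections d n tau tm P) \<le> tau * n^2 * (12 * n + 3)"
proof -
  define X where "X = {..<tau} \<times> {..<n} \<times> {..<n}"
  define W where "W = (\<lambda>(k, s, q). (\<lambda>t. (s, q, t)) ` segment_intersections d n tm P s q k)"
  have W: "finite (W x) \<and> card (W x) \<le> 12 * n + 3" if "x \<in> X" for x
  proof -
    from \<open>x \<in> X\<close> obtain k s q where x: "x = (k, s, q)" and "k < tau" "s < n" "q < n"
      unfolding X_def by auto
    then have "tm k \<le> tm (Suc k)"
      using assms(2) by simp
    then have seg: "finite (segment_intersections d n tm P s q k)"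
      "card (segment_intersections d n tm P s q k) \<le> 12 * n + 3"
      using card_segment_intersections[OF assms(3) \<open>k < tau\<close> _ \<open>s < n\<close> \<open>q < n\<close>] by blast+
    have "W x = (\<lambda>t. (s, q, t)) ` segment_intersections d n tm P s q k"
      unfolding W_def x by simp
    then show ?thesis
      using seg card_image_le[OF seg(1), of "\<lambda>t. (s, q, t)"] by simp
  qed
  have "finite X"
    unfolding X_def by simp
  then have fin: "finite (\<Union>x\<in>X. W x)"
    using W by blast
  have sub: "intersections d n tau tm P \<subseteq> (\<Union>x\<in>X. W x)"
    using intersections_subset_segment_intersections[OF assms(1,2)] unfolding X_def W_def .
  have "card (intersections d n tau tm P) \<le> card (\<Union>x\<in>X. W x)"
    by (rule card_mono[OF fin sub])
  also have "\<dots> \<le> (\<Sum>x\<in>X. card (W x))"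
    by (rule card_UN_le[OF \<open>finite X\<close>])
  also have "\<dots> \<le> (\<Sum>x\<in>X. 12 * n + 3)"
    using W by (intro sum_mono) blast
  also have "\<dots> = card X * (12 * n + 3)"
    by simp
  also have "card X = tau * n^2"
    unfolding X_def by (simp add: card_cartesian_product power2_eq_square)
  finally show ?thesis
    using finite_subset[OF sub fin] by simp
qed

theorem mainTheorem11:
  shows "\<exists>C::real. \<forall>(d::nat) (n::nat) (tau::nat) (tm::nat \<Rightarrow> real) (P::nat \<Rightarrow> real \<Rightarrow> nat \<Rightarrow> real).
     tau \<ge> 1 \<longrightarrow> (\<forall>k<tau. tm k < tm (Suc k)) \<longrightarrow>
     (\<forall>s<n. piecewise_linear_traj tau tm (P s)) \<longrightarrow>
     finite (intersections d n tau tm P) \<and>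
     real (card (intersections d n tau tm P)) \<le> C * real tau * real n ^ 3"
proof (intro exI[of _ 15] allI impI)
  fix d n tau :: nat and tm :: "nat \<Rightarrow> real" and P :: "nat \<Rightarrow> real \<Rightarrow> nat \<Rightarrow> real"
  assume "tau \<ge> 1" and "\<forall>k<tau. tm k < tm (Suc k)"
    and traj: "\<forall>s<n. piecewise_linear_traj tau tm (P s)"
  then have "0 < tau" "\<forall>k<tau. tm k \<le> tm (Suc k)"
    by (simp_all add: less_imp_le)
  from card_intersections_le[OF this traj]
  have fin: "finite (intersections d n tau tm P)"
    and card: "card (intersections d n tau tm P) \<le> tau * n^2 * (12 * n + 3)"
    by blast+
  have "tau * n^2 * (12 * n + 3) \<le> 15 * tau * n^3"
  proof (cases "n = 0")
    case False
    then have "tau * n^2 * (12 * n + 3) \<le> tau * n^2 * (15 * n)"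
      by (intro mult_le_mono2) simp
    then show ?thesis
      by (simp add: power2_eq_square power3_eq_cube mult_ac)
  qed simp
  with card have "card (intersections d n tau tm P) \<le> 15 * tau * n^3"
    by (rule le_trans)
  then have "real (card (intersections d n tau tm P)) \<le> real (15 * tau * n^3)"
    by (rule of_nat_mono)
  with fin show "finite (intersections d n tau tm P) \<and>
      real (card (intersections d n tau tm P)) \<le> 15 * real tau * real n ^ 3"
    by simp
qed

end
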